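(* Let $q\ge 67$ be a prime. For a prime $p\ne q$ let $f_p$ be the smallest integer $k\ge1$ with $p^k\equiv1\pmod q$, and put $$v(q)=\sum_{p\ne q,\ p\not\equiv1\ (\mathrm{mod}\ q)}\frac{\log p}{p^{f_p}-1},$$ the sum over primes $p$. Then $$v(q)\le\frac{2\log(9\log q)\,\log q}{3q}.$$ *)

theory Defs
  imports "HOL-Analysis.Analysis" "HOL-Number_Theory.Number_Theory"
begin

definition fp :: "nat \<Rightarrow> nat \<Rightarrow> nat" where
  "fp q p = ord q p"

definition vset :: "nat \<Rightarrow> nat set" where
  "vset q = {p. prime p \<and> p \<noteq> q \<and> \<not> [p = 1] (mod q)}"

definition vterm :: "nat \<Rightarrow> nat \<Rightarrow> real" where
  "vterm q p = ln (real p) / (real p ^ fp q p - 1)"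

end

theory Submission
  imports Defs
begin

text \<open>Split the primes \<open>p\<close> of \<open>v(q)\<close> by size and by the order \<open>f = ord q p \<ge> 2\<close>.
  If \<open>f = 2\<close> then \<open>q\<close> divides \<open>p + 1\<close>, so \<open>p = k q - 1\<close> with \<open>k \<ge> 2\<close>, and these terms
  telescope to \<open>O(log q / q\<^sup>2)\<close>; so do the primes \<open>p > q\<close> of order at least 3.
  For \<open>p < q\<close>, \<open>q (p - 1)\<close> divides \<open>p\<^sup>f - 1\<close>. Hence the primes \<open>p \<le> P = \<lfloor>9 log q\<rfloor>\<close>
  contribute at most \<open>q\<^sup>-\<^sup>1 \<Sum> log p / (p - 1) \<le> ((log P)\<^sup>2 / 4 + 2) / q\<close>. Among the
  primes \<open>P < p < q\<close> at most \<open>f - 1\<close> have order \<open>f\<close> (they are roots of \<open>x\<^sup>f = 1\<close>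
  modulo \<open>q\<close>), each contributing at most \<open>2 log q / (f q P)\<close>; summing over
  \<open>f \<le> N + 2\<close> with \<open>2\<^sup>N \<ge> q\<close> gives \<open>2 N log q / (q P)\<close>, and the primes of larger order
  contribute at most \<open>1 / (2 q)\<close>.\<close>

section \<open>Elementary estimates\<close>

lemma ln_diff_bounds:
  fixes x y :: real
  assumes "0 < y" "y \<le> x"
  shows "(x - y) / x \<le> ln x - ln y" and "ln x - ln y \<le> (x - y) / y"
proof -
  have "ln (y / x) \<le> y / x - 1" using assms by (intro ln_le_minus_one) auto
  then show "(x - y) / x \<le> ln x - ln y" using assms by (simp add: ln_div field_simps)
  have "ln (x / y) \<le> x / y - 1" using assms by (intro ln_le_minus_one) auto
  then show "ln x - ln y \<le> (x - y) / y" using assms by (simp add: ln_div field_simps)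
qed

lemma ln_ge_of_two_power_le:
  fixes x :: real
  assumes "2 ^ k \<le> x"
  shows "2 / 3 * k \<le> ln x"
proof -
  have "2 / 3 * k \<le> k * ln 2" using mult_left_mono[OF ln2_ge_two_thirds, of "real k"] by simp
  also have "\<dots> = ln (2 ^ k)" by (simp add: ln_realpow)
  also have "\<dots> \<le> ln x"
    using assms less_le_trans[OF zero_less_power[of 2 k] assms] by (subst ln_le_cancel_iff) auto
  finally show ?thesis .
qed

lemma ln_3_le: "ln (3 :: real) \<le> 43 / 36"
proof -
  have "ln (3 :: real) = ln 2 + ln (3 / 2)" using ln_mult[of 2 "3 / 2"] by simp
  moreover have "ln (3 / 2 :: real) \<le> 1 / 2" using ln_le_minus_one[of "3 / 2"] by simp
  ultimately show ?thesis using ln2_le_25_over_36 by linarith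
qed

lemma nine_ln_plus_one_le:
  fixes x :: real
  assumes "67 \<le> x"
  shows "9 * ln x + 1 \<le> x"
proof -
  have "ln x - ln 64 \<le> (x - 64) / 64" using ln_diff_bounds(2)[of 64 x] assms by simp
  then have "ln x \<le> ln 64 + x / 64 - 1" by (simp add: diff_divide_distrib)
  moreover have "ln (64 :: real) = 6 * ln 2" using ln_realpow[of 2 6] by simp
  ultimately show ?thesis using ln2_le_25_over_36 assms by linarith
qed

lemma ln_div_minus_one_antimono:
  fixes x y :: real
  assumes "exp 1 \<le> x" "x \<le> y"
  shows "ln y / (y - 1) \<le> ln x / (x - 1)"
proof -
  have x: "1 < x" "1 \<le> ln x"
    using assms(1) less_le_trans[of 1 "exp 1" x] by (auto simp: ln_ge_iff)
  have "ln y \<le> ln x + (y - x) / x" using ln_diff_bounds(2)[of x y] assms x by simp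
  then have "ln y * (x - 1) \<le> (ln x + (y - x) / x) * (x - 1)" using x by (intro mult_right_mono) auto
  also have "\<dots> = ln x * (x - 1) + (y - x) * ((x - 1) / x)" using x by (simp add: field_simps)
  also have "\<dots> \<le> ln x * (x - 1) + (y - x) * ln x"
  proof -
    have "(x - 1) / x \<le> 1" using x by simp
    then have "(x - 1) / x \<le> ln x" using x by linarith
    then show ?thesis using assms by (intro add_left_mono mult_left_mono) auto
  qed
  finally show ?thesis using x assms by (simp add: divide_simps algebra_simps)
qed

lemma ln_div_mult_pred_le_diff:
  fixes x L :: real
  assumes x: "2 \<le> x" and "0 \<le> L"
  shows "(L + ln x) / (x * (x - 1)) \<le> (L + 3 + ln (x - 1)) / (x - 1) - (L + 3 + ln x) / x"
proof -
  have "x * (ln x - ln (x - 1)) \<le> x * (1 / (x - 1))"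
    using ln_diff_bounds(2)[of "x - 1" x] x by (intro mult_left_mono) auto
  also have "\<dots> \<le> 3" using x by (simp add: field_simps)
  finally have "L + ln x \<le> L + 3 + ln x - x * (ln x - ln (x - 1))" by simp
  then have "(L + ln x) / (x * (x - 1)) \<le> (L + 3 + ln x - x * (ln x - ln (x - 1))) / (x * (x - 1))"
    using x by (intro divide_right_mono) auto
  also have "\<dots> = (L + 3 + ln (x - 1)) / (x - 1) - (L + 3 + ln x) / x"
    using x by (simp add: field_simps)
  finally show ?thesis .
qed

lemma ln_div_sq_minus_one_le:
  fixes p q k :: nat
  assumes q: "3 \<le> q" and k: "2 \<le> k" and p: "p + 1 = q * k"
  shows "ln p / (real p ^ 2 - 1) \<le> (ln q + ln k) / (real k * (real k - 1)) / real q ^ 2"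
proof -
  have rp: "real p = real q * real k - 1" using arg_cong[OF p, of real] by simp
  have qk: "6 \<le> real q * real k" using q k mult_mono[of 3 "real q" 2 "real k"] by simp
  have "ln p \<le> ln (real q * real k)" unfolding rp using qk by (subst ln_le_cancel_iff) auto
  also have "\<dots> = ln q + ln k" using q k by (simp add: ln_mult)
  finally have "ln p / ((real q * real k - 2) * (real q * real k))
      \<le> (ln q + ln k) / ((real k - 1) * real q * (real q * real k))"
    using q k qk by (intro frac_le mult_right_mono) (auto simp: algebra_simps)
  moreover have "real p ^ 2 - 1 = (real q * real k - 2) * (real q * real k)"
    unfolding rp by (simp add: power2_eq_square algebra_simps)
  moreover have "(ln q + ln k) / ((real k - 1) * real q * (real q * real k))
      = (ln q + ln k) / (real k * (real k - 1)) / real q ^ 2"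
    by (simp add: power2_eq_square field_simps)
  ultimately show ?thesis by simp
qed

lemma ln_div_pow_minus_one_le_of_gt:
  fixes p q f :: nat
  assumes q: "3 \<le> q" and "q < p" and f: "3 \<le> f"
  shows "ln p / (real p ^ f - 1) \<le> ln q / q * (1 / real (p - 1) - 1 / real p)"
proof -
  have p: "4 \<le> real p" using assms by linarith
  have p3: "4 ^ 3 \<le> real p ^ 3" using p by (intro power_mono) auto
  have "real p ^ 3 \<le> real p ^ f" using p f by (intro power_increasing) auto
  then have "ln p / (real p ^ f - 1) \<le> ln p / (real p ^ 3 - 1)"
    using p p3 by (intro divide_left_mono mult_pos_pos) auto
  also have "\<dots> = ln p / p * (p / (real p ^ 3 - 1))" using p by (simp add: field_simps)
  also have "\<dots> \<le> ln q / q * (1 / (real p * (real p - 1)))"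
  proof (rule mult_mono)
    show "ln p / p \<le> ln q / q"
      using ln_x_over_x_mono[of q p] exp_le q \<open>q < p\<close> by simp
    have "1 * 1 \<le> real p * real p" using p by (intro mult_mono) auto
    then have "real p * (real p * (real p - 1)) \<le> real p ^ 3 - 1"
      by (simp add: power3_eq_cube algebra_simps)
    then show "p / (real p ^ 3 - 1) \<le> 1 / (real p * (real p - 1))"
      using p by (simp add: field_simps)
  qed (use p p3 q in auto)
  also have "1 / (real p * (real p - 1)) = 1 / real (p - 1) - 1 / real p"
    using p by (simp add: of_nat_diff field_simps)
  finally show ?thesis .
qed

lemma ln_div_pow_minus_one_le:
  fixes p f :: nat and Y :: real
  assumes "2 \<le> p" "1 \<le> f" "exp 1 \<le> Y" "Y \<le> real p ^ f"
  shows "ln p / (real p ^ f - 1) \<le> ln Y / (f * (Y - 1))"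
proof -
  have "ln p / (real p ^ f - 1) = ln (real p ^ f) / (real p ^ f - 1) / f"
    using assms by (simp add: ln_realpow)
  also have "\<dots> \<le> ln Y / (Y - 1) / f"
    using ln_div_minus_one_antimono assms by (intro divide_right_mono) auto
  finally show ?thesis by (simp add: mult.commute)
qed

lemma ln_div_pow_minus_one_le_high_exp:
  fixes p N f :: nat
  assumes p: "2 \<le> p" and f: "N + 3 \<le> f"
  shows "ln p / (real p ^ f - 1) \<le> 1 / 2 ^ N * (1 / real p - 1 / real (p + 1))"
proof -
  have rp: "2 \<le> real p" using p by simp
  have "2 ^ N * real p ^ 3 \<le> real p ^ N * real p ^ 3" using rp by (intro mult_right_mono power_mono) auto
  also have "\<dots> \<le> real p ^ f" using rp f by (simp flip: power_add)
  finally have "2 ^ N * real p ^ 3 \<le> real p ^ f" .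
  moreover have "(1 :: real) \<le> 2 ^ N" by simp
  moreover have "2 ^ N * (real p ^ 3 - 1) = 2 ^ N * real p ^ 3 - 2 ^ N" by (simp add: algebra_simps)
  ultimately have "2 ^ N * (real p ^ 3 - 1) \<le> real p ^ f - 1" by linarith
  moreover have "8 \<le> real p ^ 3" using power_mono[OF rp, of 3] by simp
  moreover have "ln p \<le> real p - 1" using rp by (intro ln_le_minus_one) auto
  ultimately have "ln p / (real p ^ f - 1) \<le> (real p - 1) / (2 ^ N * (real p ^ 3 - 1))"
    using rp by (intro frac_le) auto
  also have "\<dots> = 1 / 2 ^ N * (1 / (real p ^ 2 + real p + 1))"
  proof -
    have "real p ^ 3 - 1 = (real p - 1) * (real p ^ 2 + real p + 1)"
      by (simp add: power2_eq_square power3_eq_cube algebra_simps)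
    then show ?thesis using rp by simp
  qed
  also have "\<dots> \<le> 1 / 2 ^ N * (1 / (real p * (real p + 1)))"
    using rp by (intro mult_left_mono divide_left_mono mult_pos_pos add_pos_nonneg)
      (auto simp: power2_eq_square algebra_simps)
  also have "1 / (real p * (real p + 1)) = 1 / real p - 1 / real (p + 1)"
    using rp by (simp add: field_simps)
  finally show ?thesis .
qed

lemma sum_telescope_antitone_le:
  fixes g :: "nat \<Rightarrow> real"
  assumes "finite K" "K \<subseteq> {Suc a..}"
    and antitone: "\<And>k. a < k \<Longrightarrow> g k \<le> g (k - 1)" and nonneg: "\<And>k. a \<le> k \<Longrightarrow> 0 \<le> g k"
  shows "(\<Sum>k\<in>K. g (k - 1) - g k) \<le> g a"
proof -
  define M where "M = Max (insert a K)"
  have "a \<le> M" "K \<subseteq> {Suc a..M}" using assms(1,2) by (auto simp: M_def)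
  then have "(\<Sum>k\<in>K. g (k - 1) - g k) \<le> (\<Sum>k\<in>{Suc a..M}. g (k - 1) - g k)"
    using antitone by (intro sum_mono2) auto
  also have "\<dots> = g a - g M"
    using sum_telescope''[OF \<open>a \<le> M\<close>, of "\<lambda>k. - g k"] by simp
  also have "\<dots> \<le> g a" using nonneg[OF \<open>a \<le> M\<close>] by simp
  finally show ?thesis .
qed

section \<open>The sum of log p / (p - 1) over small primes\<close>

lemma ln_sq_diff_ge:
  fixes x :: real
  assumes x: "5 \<le> x"
  shows "ln x / x - 1 / (x * (x - 2)) \<le> ((ln x)\<^sup>2 - (ln (x - 2))\<^sup>2) / 4"
proof -
  define a where "a = ln x"
  define d where "d = ln x - ln (x - 2)"
  have a: "1 \<le> a" using ln_ge_of_two_power_le[of 2 x] x by (simp add: a_def)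
  have d_lower: "2 / x \<le> d" and d_upper: "d \<le> 2 / (x - 2)"
    using ln_diff_bounds[of "x - 2" x] x by (simp_all add: d_def)
  have "0 \<le> d" using d_lower divide_nonneg_nonneg[of 2 x] x by linarith
  have "2 / (x - 2) \<le> 2 / 3" using x by (simp add: field_simps)
  then have "(2 / x) * (2 * a - 2 / (x - 2)) \<le> d * (2 * a - d)"
    using d_lower d_upper a x \<open>0 \<le> d\<close> by (intro mult_mono) auto
  then have "(2 / x) * (2 * a - 2 / (x - 2)) / 4 \<le> d * (2 * a - d) / 4"
    by (rule divide_right_mono) simp
  moreover have "a / x - 1 / (x * (x - 2)) = (2 / x) * (2 * a - 2 / (x - 2)) / 4"
    using x by (simp add: field_simps)
  moreover have "d * (2 * a - d) = (ln x)\<^sup>2 - (ln (x - 2))\<^sup>2"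
    by (simp add: a_def d_def power2_eq_square algebra_simps)
  ultimately show ?thesis by (simp add: a_def)
qed

text \<open>The main term is the antiderivative of \<open>ln t / (2 t)\<close>; the correction term absorbs the
  error of comparing \<open>ln x / (x - 1)\<close> with the step-2 differences of the main term.\<close>
definition odd_ln_majorant :: "real \<Rightarrow> real" where
  "odd_ln_majorant x = (ln x)\<^sup>2 / 4 - (8 / 3 + ln x) / (2 * x)"

lemma ln_div_minus_one_le_odd_ln_majorant_diff:
  fixes x :: real
  assumes x: "5 \<le> x"
  shows "ln x / (x - 1) \<le> odd_ln_majorant x - odd_ln_majorant (x - 2)"
proof -
  define a where "a = ln x"
  have "x * (ln x - ln (x - 2)) \<le> x * (2 / (x - 2))"
    using ln_diff_bounds(2)[of "x - 2" x] x by (intro mult_left_mono) auto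
  also have "\<dots> \<le> 10 / 3" using x by (simp add: field_simps)
  finally have "2 * (1 + a) \<le> 16 / 3 + 2 * a - x * (a - ln (x - 2))" by (simp add: a_def)
  have "(1 + a) / (x * (x - 2)) = 2 * (1 + a) / (2 * x * (x - 2))"
    using x by (simp add: field_simps)
  also have "\<dots> \<le> (16 / 3 + 2 * a - x * (a - ln (x - 2))) / (2 * x * (x - 2))"
    using \<open>2 * (1 + a) \<le> 16 / 3 + 2 * a - x * (a - ln (x - 2))\<close> x by (intro divide_right_mono) auto
  finally have "(1 + a) / (x * (x - 2)) \<le> (16 / 3 + 2 * a - x * (a - ln (x - 2))) / (2 * x * (x - 2))" .
  moreover have "a / (x - 1) \<le> a / x + a / (x * (x - 2))"
  proof -
    have "1 \<le> a" using ln_ge_of_two_power_le[of 2 x] x by (simp add: a_def)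
    then have "a / (x * (x - 1)) \<le> a / (x * (x - 2))"
      using x by (intro divide_left_mono mult_pos_pos) auto
    moreover have "a / (x - 1) = a / x + a / (x * (x - 1))" using x by (simp add: field_simps)
    ultimately show ?thesis by linarith
  qed
  moreover have "a / x + a / (x * (x - 2)) = (a / x - 1 / (x * (x - 2))) + (1 + a) / (x * (x - 2))"
    by (simp add: add_divide_distrib)
  moreover have "((ln x)\<^sup>2 - (ln (x - 2))\<^sup>2) / 4
      + (16 / 3 + 2 * a - x * (a - ln (x - 2))) / (2 * x * (x - 2))
    = odd_ln_majorant x - odd_ln_majorant (x - 2)"
    using x by (simp add: odd_ln_majorant_def a_def field_simps power2_eq_square)
  ultimately show ?thesis using ln_sq_diff_ge[OF x] unfolding a_def by linarith
qed

lemma sum_odd_ln_div_le: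
  fixes M :: nat
  assumes "1 \<le> M"
  shows "(\<Sum>i=2..M. ln (real (2 * i + 1)) / (real (2 * i + 1) - 1))
    \<le> (ln (2 * M + 1))\<^sup>2 / 4 - odd_ln_majorant 3"
proof -
  define G where "G i = odd_ln_majorant (2 * i + 1)" for i :: nat
  have "(\<Sum>i=2..M. ln (real (2 * i + 1)) / (real (2 * i + 1) - 1)) \<le> (\<Sum>i=2..M. G i - G (i - 1))"
  proof (rule sum_mono)
    fix i assume "i \<in> {2..M}"
    then have x: "5 \<le> real (2 * i + 1)" and "real (2 * (i - 1) + 1) = real (2 * i + 1) - 2"
      by (auto simp: of_nat_diff)
    then show "ln (real (2 * i + 1)) / (real (2 * i + 1) - 1) \<le> G i - G (i - 1)"
      unfolding G_def using ln_div_minus_one_le_odd_ln_majorant_diff[OF x] by simp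
  qed
  also have "\<dots> = G M - G 1"
    using sum_telescope''[OF assms, of G] by (simp add: numeral_2_eq_2)
  also have "G M \<le> (ln (2 * M + 1))\<^sup>2 / 4"
    by (simp add: G_def odd_ln_majorant_def add_pos_nonneg)
  finally show ?thesis by (simp add: G_def)
qed

lemma sum_primes_ln_div_le:
  fixes P :: nat
  assumes "3 \<le> P"
  shows "(\<Sum>p | prime p \<and> p \<le> P. ln p / (real p - 1)) \<le> (ln P)\<^sup>2 / 4 + 2"
proof -
  define h where "h p = ln (real p) / (real p - 1)" for p :: nat
  define M where "M = (P - 1) div 2"
  have M: "1 \<le> M" "2 * M + 1 \<le> P" using assms by (auto simp: M_def)
  have "{p. prime p \<and> p \<le> P} \<subseteq> {2, 3} \<union> (\<lambda>i. 2 * i + 1) ` {2..M}"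
  proof
    fix p assume p: "p \<in> {p. prime p \<and> p \<le> P}"
    show "p \<in> {2, 3} \<union> (\<lambda>i. 2 * i + 1) ` {2..M}"
    proof (cases "p \<in> {2, 3}")
      case False
      with p have "odd p" "5 \<le> p" using prime_odd_nat[of p] prime_ge_2_nat[of p] by auto presburger
      then have "p = 2 * (p div 2) + 1" "p div 2 \<in> {2..M}" using p by (auto simp: M_def) presburger
      then show ?thesis by blast
    qed auto
  qed
  then have "(\<Sum>p | prime p \<and> p \<le> P. h p) \<le> sum h ({2, 3} \<union> (\<lambda>i. 2 * i + 1) ` {2..M})"
    by (intro sum_mono2) (auto simp: h_def)
  also have "\<dots> = h 2 + h 3 + (\<Sum>i=2..M. h (2 * i + 1))"
    by (subst sum.union_disjoint) (auto simp: sum.reindex inj_on_def)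
  also have "(\<Sum>i=2..M. h (2 * i + 1)) \<le> (ln P)\<^sup>2 / 4 - odd_ln_majorant 3"
  proof -
    have "(ln (2 * M + 1))\<^sup>2 \<le> (ln P)\<^sup>2" using M(2) by (intro power_mono) auto
    then show ?thesis using sum_odd_ln_div_le[OF M(1)] unfolding h_def by linarith
  qed
  also have "h 2 + h 3 = ln 2 + ln 3 / 2" by (simp add: h_def)
  finally have "(\<Sum>p | prime p \<and> p \<le> P. h p) \<le> ln 2 + ln 3 / 2 + ((ln P)\<^sup>2 / 4 - odd_ln_majorant 3)"
    by simp
  moreover have "ln 2 + ln 3 / 2 - odd_ln_majorant 3 = ln 2 + 2 / 3 * ln 3 + 4 / 9 - (ln 3)\<^sup>2 / 4"
    by (simp add: odd_ln_majorant_def field_simps)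
  ultimately show ?thesis
    using ln2_le_25_over_36 ln_3_le zero_le_power2[of "ln (3 :: real)"] unfolding h_def by linarith
qed

section \<open>Orders of the primes counted by v(q)\<close>

lemma vset_coprime:
  assumes "prime q" "p \<in> vset q"
  shows "coprime q p"
  using assms by (auto simp: vset_def primes_coprime)

lemma vset_ge_2:
  assumes "p \<in> vset q"
  shows "2 \<le> p"
  using assms by (auto simp: vset_def prime_ge_2_nat)

lemma ord_vset_ge_2:
  assumes "prime q" "p \<in> vset q"
  shows "2 \<le> ord q p"
proof -
  have "0 < ord q p" using vset_coprime[OF assms] by simp
  moreover have "ord q p \<noteq> 1" using assms(2) ord_eq_Suc_0_iff[of q p] by (auto simp: vset_def)
  ultimately show ?thesis by linarith
qed

lemma vterm_nonneg:
  assumes "prime q" "p \<in> vset q"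
  shows "0 \<le> vterm q p"
proof -
  have "real p ^ 1 \<le> real p ^ ord q p"
    using vset_ge_2[OF assms(2)] ord_vset_ge_2[OF assms] by (intro power_increasing) auto
  then show ?thesis using vset_ge_2[OF assms(2)] by (simp add: vterm_def fp_def)
qed

lemma vset_ord_eq_2E:
  assumes "prime q" "3 < q" "p \<in> vset q" "ord q p = 2"
  obtains k where "p + 1 = q * k" "2 \<le> k"
proof -
  have p: "prime p" "\<not> [p = 1] (mod q)" using assms(3) by (auto simp: vset_def)
  have "q dvd p\<^sup>2 - 1" using ord[of p q] assms(4) cong_to_1_nat by metis
  moreover have "p\<^sup>2 - 1 = (p - 1) * (p + 1)" by (cases p) (auto simp: power2_eq_square)
  moreover have "\<not> q dvd p - 1" using p cong_altdef_nat[of 1 p q] prime_ge_1_nat by auto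
  ultimately have "q dvd p + 1" using assms(1) prime_dvd_mult_nat by metis
  then obtain k where k: "p + 1 = q * k" by blast
  have "k \<noteq> 1"
  proof
    assume "k = 1"
    then have "odd (p + 1)" using k assms(1,2) prime_odd_nat[of q] by simp
    then have "even p" by simp
    then have "p = 2" using p(1) prime_odd_nat[of p] prime_ge_2_nat[of p] by force
    with k \<open>k = 1\<close> assms(2) show False by simp
  qed
  moreover have "k \<noteq> 0" using k by (auto intro: Nat.gr0I)
  ultimately have "2 \<le> k" by simp
  with k that show ?thesis by blast
qed

lemma ord_vset_below_ge_3:
  assumes "prime q" "3 < q" "p \<in> vset q" "p < q"
  shows "3 \<le> ord q p"
proof (rule ccontr)
  assume "\<not> 3 \<le> ord q p"
  then have "ord q p = 2" using ord_vset_ge_2[OF assms(1,3)] by simp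
  then obtain k where "p + 1 = q * k" "2 \<le> k" using vset_ord_eq_2E assms by metis
  then have "q * 2 \<le> p + 1" by (metis mult_le_mono2)
  with assms(2,4) show False by simp
qed

lemma pow_ord_vset_below_ge:
  assumes "prime q" "p \<in> vset q" "p < q"
  shows "real q * (real p - 1) \<le> real p ^ ord q p - 1"
proof -
  have p: "2 \<le> p" using vset_ge_2[OF assms(2)] .
  have "q dvd p ^ ord q p - 1" using ord[of p q] cong_to_1_nat by blast
  moreover have "p - 1 dvd p ^ ord q p - 1"
  proof -
    have "[p = 1] (mod p - 1)" using p by (simp add: cong_altdef_nat)
    then have "[p ^ ord q p = 1 ^ ord q p] (mod p - 1)" by (rule cong_pow)
    then show ?thesis using cong_to_1_nat by simp
  qed
  moreover have "coprime q (p - 1)"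
    using assms p by (intro prime_imp_coprime) (auto dest: dvd_imp_le)
  ultimately have "q * (p - 1) dvd p ^ ord q p - 1" using divides_mult by blast
  moreover have "p ^ 1 \<le> p ^ ord q p"
    using p ord_vset_ge_2[OF assms(1,2)] by (intro power_increasing) auto
  ultimately have "q * (p - 1) \<le> p ^ ord q p - 1" using p by (intro dvd_imp_le) auto
  then have "real (q * (p - 1)) \<le> real (p ^ ord q p - 1)" by (simp only: of_nat_le_iff)
  then show ?thesis using p \<open>p ^ 1 \<le> p ^ ord q p\<close> by (simp add: of_nat_diff)
qed

lemma card_ord_eq_le:
  fixes q f :: nat
  assumes "prime q" "0 < f"
  shows "card {x \<in> {2..<q}. ord q x = f} \<le> f - 1"
proof -
  define R where "R = {x \<in> {..<q}. [x ^ f = 1] (mod q)}"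
  have "1 \<in> R" using prime_gt_1_nat[OF assms(1)] by (simp add: R_def)
  have "{x \<in> {2..<q}. ord q x = f} \<subseteq> R - {1}" using ord by (auto simp: R_def)
  then have "card {x \<in> {2..<q}. ord q x = f} \<le> card (R - {1})"
    by (intro card_mono) (auto simp: R_def)
  also have "\<dots> = card R - 1" using \<open>1 \<in> R\<close> by (simp add: R_def)
  also have "card R \<le> f" unfolding R_def using assms by (intro roots_mod_prime_bound)
  finally show ?thesis by simp
qed

section \<open>Bounds for classes of primes\<close>

lemma sum_vterm_ord_2_le:
  assumes q: "prime q" "3 < q" and S: "finite S" "S \<subseteq> vset q" "\<forall>p\<in>S. ord q p = 2"
  shows "sum (vterm q) S \<le> (ln q + 3) / real q ^ 2"
proof -
  define g where "g i = (ln q + 3 + ln (real i)) / real i" for i :: nat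
  define k where "k p = (p + 1) div q" for p
  have k: "p + 1 = q * k p" "2 \<le> k p" if p: "p \<in> S" for p
  proof -
    obtain j where "p + 1 = q * j" "2 \<le> j"
      by (rule vset_ord_eq_2E[OF q, of p]) (use S p in auto)
    moreover from this have "k p = j" using q by (simp add: k_def)
    ultimately show "p + 1 = q * k p" "2 \<le> k p" by auto
  qed
  have "inj_on k S" by (rule inj_onI) (metis k(1) add_right_cancel)
  have g_step: "0 \<le> g (i - 1) - g i" if "2 \<le> i" for i
  proof -
    have "0 \<le> (ln q + ln i) / (real i * (real i - 1))" using that q by simp
    also have "\<dots> \<le> g (i - 1) - g i"
      using ln_div_mult_pred_le_diff[of "real i" "ln q"] that q by (simp add: g_def of_nat_diff)
    finally show ?thesis by simp
  qed
  have "sum (vterm q) S \<le> (\<Sum>p\<in>S. (g (k p - 1) - g (k p)) / real q ^ 2)"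
  proof (rule sum_mono)
    fix p assume p: "p \<in> S"
    have "vterm q p = ln p / (real p ^ 2 - 1)" using S p by (simp add: vterm_def fp_def)
    also have "\<dots> \<le> (ln q + ln (k p)) / (real (k p) * (real (k p) - 1)) / real q ^ 2"
      using k[OF p] q by (intro ln_div_sq_minus_one_le) auto
    also have "\<dots> \<le> (g (k p - 1) - g (k p)) / real q ^ 2"
      using ln_div_mult_pred_le_diff[of "real (k p)" "ln q"] k[OF p] q
      by (intro divide_right_mono) (auto simp: g_def of_nat_diff)
    finally show "vterm q p \<le> (g (k p - 1) - g (k p)) / real q ^ 2" .
  qed
  also have "\<dots> = (\<Sum>i\<in>k ` S. g (i - 1) - g i) / real q ^ 2"
    using \<open>inj_on k S\<close> by (simp add: sum.reindex sum_divide_distrib)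
  also have "\<dots> \<le> g 1 / real q ^ 2"
  proof (intro divide_right_mono sum_telescope_antitone_le)
    show "finite (k ` S)" "k ` S \<subseteq> {Suc 1..}" using S k(2) by (auto simp: numeral_2_eq_2)
    show "g i \<le> g (i - 1)" if "1 < i" for i using g_step[of i] that by simp
    show "0 \<le> g i" if "1 \<le> i" for i using that q by (simp add: g_def)
  qed simp
  finally show ?thesis by (simp add: g_def)
qed

lemma sum_vterm_above_ord_ge_3_le:
  fixes q :: nat
  assumes q: "3 \<le> q" and S: "finite S" "\<forall>p\<in>S. q < p \<and> 3 \<le> ord q p"
  shows "sum (vterm q) S \<le> ln q / real q ^ 2"
proof -
  have "sum (vterm q) S \<le> (\<Sum>p\<in>S. ln q / q * (1 / real (p - 1) - 1 / real p))"
    unfolding vterm_def fp_def using S q by (intro sum_mono ln_div_pow_minus_one_le_of_gt) auto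
  also have "\<dots> = ln q / q * (\<Sum>p\<in>S. 1 / real (p - 1) - 1 / real p)"
    by (simp add: sum_distrib_left)
  also have "\<dots> \<le> ln q / q * (1 / real q)"
  proof (intro mult_left_mono sum_telescope_antitone_le[where g = "\<lambda>k. 1 / real k"])
    show "finite S" "S \<subseteq> {Suc q..}" using S by auto
    show "1 / real k \<le> 1 / real (k - 1)" if "q < k" for k
      using that q by (intro divide_left_mono) (auto simp: of_nat_diff)
  qed (use q in auto)
  finally show ?thesis by (simp add: power2_eq_square)
qed

lemma sum_vterm_above_le:
  assumes q: "prime q" "3 < q" and S: "finite S" "S \<subseteq> vset q" "\<forall>p\<in>S. q < p"
  shows "sum (vterm q) S \<le> (2 * ln q + 3) / real q ^ 2"
proof -
  have "sum (vterm q) S = sum (vterm q) (S \<inter> {p. ord q p = 2}) + sum (vterm q) (S - {p. ord q p = 2})"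
    using S(1) by (rule sum.Int_Diff)
  also have "\<dots> \<le> (ln q + 3) / real q ^ 2 + ln q / real q ^ 2"
  proof (rule add_mono)
    show "sum (vterm q) (S \<inter> {p. ord q p = 2}) \<le> (ln q + 3) / real q ^ 2"
      using q S by (intro sum_vterm_ord_2_le) auto
    have "3 \<le> ord q p" if "p \<in> S - {p. ord q p = 2}" for p
      using that S ord_vset_ge_2[OF q(1), of p] by auto
    then show "sum (vterm q) (S - {p. ord q p = 2}) \<le> ln q / real q ^ 2"
      using q S by (intro sum_vterm_above_ord_ge_3_le) auto
  qed
  finally show ?thesis by (simp add: add_divide_distrib)
qed

lemma vterm_below_le:
  assumes "prime q" "p \<in> vset q" "p < q"
  shows "vterm q p \<le> ln p / (real p - 1) / q"
proof -
  have pos: "0 < real q * (real p - 1)"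
    using vset_ge_2[OF assms(2)] prime_gt_0_nat[OF assms(1)] by simp
  moreover have "real q * (real p - 1) \<le> real p ^ ord q p - 1"
    using pow_ord_vset_below_ge[OF assms] .
  moreover have "0 \<le> ln (real p)" using vset_ge_2[OF assms(2)] by simp
  ultimately have "vterm q p \<le> ln p / (real q * (real p - 1))"
    unfolding vterm_def fp_def by (intro divide_left_mono, auto intro!: mult_pos_pos[OF _ pos])
  then show ?thesis by (simp add: mult.commute)
qed

lemma sum_vterm_upto_le:
  assumes q: "prime q" and S: "S \<subseteq> vset q" "\<forall>p\<in>S. p < q \<and> p \<le> P" and P: "3 \<le> P"
  shows "sum (vterm q) S \<le> ((ln P)\<^sup>2 / 4 + 2) / q"
proof -
  have primes: "S \<subseteq> {p. prime p \<and> p \<le> P}" using S by (auto simp: vset_def)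
  have "sum (vterm q) S \<le> (\<Sum>p\<in>S. ln p / (real p - 1) / q)"
    using S vterm_below_le[OF q] by (intro sum_mono) auto
  also have "\<dots> = (\<Sum>p\<in>S. ln p / (real p - 1)) / q" by (simp add: sum_divide_distrib)
  also have "\<dots> \<le> (\<Sum>p | prime p \<and> p \<le> P. ln p / (real p - 1)) / q"
    using primes by (intro divide_right_mono sum_mono2) (auto dest: prime_ge_2_nat)
  also have "\<dots> \<le> ((ln P)\<^sup>2 / 4 + 2) / q"
    using sum_primes_ln_div_le[OF P] by (intro divide_right_mono) auto
  finally show ?thesis .
qed

lemma vterm_between_le:
  assumes q: "prime q" and p: "p \<in> vset q" "P < p" "p < q" and P: "1 \<le> P"
  shows "vterm q p \<le> 2 * ln q / (real (ord q p) * real q * real P)"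
proof -
  define Y where "Y = real q * real P + 1"
  have "3 * 1 \<le> real q * real P" using p P vset_ge_2[OF p(1)] by (intro mult_mono) auto
  then have "exp 1 \<le> Y" "1 < Y" using exp_le by (simp_all add: Y_def)
  have "Y \<le> real q * (real p - 1) + 1" using p by (simp add: Y_def)
  also have "\<dots> \<le> real p ^ ord q p" using pow_ord_vset_below_ge[OF q p(1,3)] by simp
  finally have "vterm q p \<le> ln Y / (real (ord q p) * (Y - 1))"
    unfolding vterm_def fp_def using \<open>exp 1 \<le> Y\<close> vset_ge_2[OF p(1)] ord_vset_ge_2[OF q p(1)]
    by (intro ln_div_pow_minus_one_le) auto
  also have "ln Y \<le> ln (real q ^ 2)"
  proof -
    have "P + 1 \<le> q" using p by simp
    then have "real q * (real P + 1) \<le> real q * real q" by (intro mult_left_mono) auto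
    then have "Y \<le> real q ^ 2" using p by (simp add: Y_def power2_eq_square distrib_left)
    then show ?thesis using \<open>exp 1 \<le> Y\<close> exp_gt_zero[of 1] by (subst ln_le_cancel_iff) linarith+
  qed
  then have "ln Y / (real (ord q p) * (Y - 1)) \<le> 2 * ln q / (real (ord q p) * (Y - 1))"
    using \<open>1 < Y\<close> by (intro divide_right_mono) (auto simp: ln_realpow)
  finally show ?thesis by (simp add: Y_def mult.assoc)
qed

lemma sum_vterm_between_low_ord_le:
  assumes q: "prime q" "3 < q" and S: "finite S" "S \<subseteq> vset q"
    and between: "\<forall>p\<in>S. P < p \<and> p < q \<and> ord q p \<le> N + 2" and P: "1 \<le> P"
  shows "sum (vterm q) S \<le> N * (2 * ln q / (real q * real P))"
proof -
  have "sum (vterm q) S = (\<Sum>f\<in>{3..N + 2}. sum (vterm q) {p \<in> S. ord q p = f})"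
    using S between ord_vset_below_ge_3[OF q] by (intro sum.group[symmetric]) auto
  also have "\<dots> \<le> (\<Sum>f\<in>{3..N + 2}. 2 * ln q / (real q * real P))"
  proof (rule sum_mono)
    fix f assume f: "f \<in> {3..N + 2}"
    define A where "A = {p \<in> S. ord q p = f}"
    have "A \<subseteq> {x \<in> {2..<q}. ord q x = f}" using S between vset_ge_2 by (auto simp: A_def)
    then have "card A \<le> card {x \<in> {2..<q}. ord q x = f}" by (intro card_mono) auto
    also have "\<dots> \<le> f - 1" using f by (intro card_ord_eq_le[OF q(1)]) auto
    finally have "card A \<le> f - 1" .
    have "sum (vterm q) A \<le> card A * (2 * ln q / (real f * real q * real P))"
      using S between vterm_between_le[OF q(1) _ _ _ P] by (intro sum_bounded_above) (auto simp: A_def)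
    also have "\<dots> \<le> f * (2 * ln q / (real f * real q * real P))"
      using \<open>card A \<le> f - 1\<close> q P by (intro mult_right_mono) auto
    also have "\<dots> = 2 * ln q / (real q * real P)" using f by simp
    finally show "sum (vterm q) {p \<in> S. ord q p = f} \<le> 2 * ln q / (real q * real P)"
      by (simp add: A_def)
  qed
  also have "\<dots> = N * (2 * ln q / (real q * real P))" by simp
  finally show ?thesis .
qed

lemma sum_vterm_high_ord_le:
  fixes q N :: nat
  assumes S: "finite S" "\<forall>p\<in>S. 2 \<le> p \<and> N + 3 \<le> ord q p"
  shows "sum (vterm q) S \<le> 1 / (2 * 2 ^ N)"
proof -
  have "sum (vterm q) S \<le> (\<Sum>p\<in>S. 1 / 2 ^ N * (1 / real (p - 1 + 1) - 1 / real (p + 1)))"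
  proof (rule sum_mono)
    fix p assume p: "p \<in> S"
    then have "p - 1 + 1 = p" using S by auto
    then show "vterm q p \<le> 1 / 2 ^ N * (1 / real (p - 1 + 1) - 1 / real (p + 1))"
      unfolding vterm_def fp_def using S p ln_div_pow_minus_one_le_high_exp[of p N "ord q p"] by simp
  qed
  also have "\<dots> = 1 / 2 ^ N * (\<Sum>p\<in>S. 1 / real (p - 1 + 1) - 1 / real (p + 1))"
    by (simp add: sum_distrib_left)
  also have "\<dots> \<le> 1 / 2 ^ N * (1 / real (1 + 1))"
  proof (intro mult_left_mono sum_telescope_antitone_le[where g = "\<lambda>k. 1 / real (k + 1)"])
    show "finite S" "S \<subseteq> {Suc 1..}" using S by auto
    show "1 / real (k + 1) \<le> 1 / real (k - 1 + 1)" if "1 < k" for k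
      using that by (intro divide_left_mono) auto
  qed auto
  finally show ?thesis by simp
qed

lemma sum_vterm_between_le:
  fixes q P N :: nat
  assumes q: "prime q" "3 < q" and S: "finite S" "S \<subseteq> vset q" "\<forall>p\<in>S. P < p \<and> p < q"
    and P: "1 \<le> P"
  shows "sum (vterm q) S \<le> N * (2 * ln q / (real q * real P)) + 1 / (2 * 2 ^ N)"
proof -
  have "sum (vterm q) S
      = sum (vterm q) (S \<inter> {p. ord q p \<le> N + 2}) + sum (vterm q) (S - {p. ord q p \<le> N + 2})"
    using S(1) by (rule sum.Int_Diff)
  also have "\<dots> \<le> N * (2 * ln q / (real q * real P)) + 1 / (2 * 2 ^ N)"
  proof (rule add_mono)
    show "sum (vterm q) (S \<inter> {p. ord q p \<le> N + 2}) \<le> N * (2 * ln q / (real q * real P))"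
      using q S P by (intro sum_vterm_between_low_ord_le) auto
    show "sum (vterm q) (S - {p. ord q p \<le> N + 2}) \<le> 1 / (2 * 2 ^ N)"
      using S vset_ge_2 by (intro sum_vterm_high_ord_le) auto
  qed
  finally show ?thesis .
qed

lemma sum_vterm_le:
  fixes q P N :: nat
  assumes q: "prime q" "3 < q" and S: "finite S" "S \<subseteq> vset q"
    and P: "3 \<le> P" "P < q" and N: "real q \<le> 2 ^ N"
  shows "sum (vterm q) S
    \<le> ((2 * ln q + 3) / q + ((ln P)\<^sup>2 / 4 + 2) + N * (2 * ln q / P) + 1 / 2) / q"
proof -
  define A where "A = S \<inter> {p. q < p}"
  define B where "B = S - {p. q < p}"
  have "sum (vterm q) S = sum (vterm q) A + sum (vterm q) B"
    unfolding A_def B_def using S(1) by (rule sum.Int_Diff)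
  also have "sum (vterm q) B = sum (vterm q) (B \<inter> {p. p \<le> P}) + sum (vterm q) (B - {p. p \<le> P})"
    using S(1) by (intro sum.Int_Diff) (simp add: B_def)
  also have "sum (vterm q) A + (sum (vterm q) (B \<inter> {p. p \<le> P}) + sum (vterm q) (B - {p. p \<le> P}))
    \<le> (2 * ln q + 3) / real q ^ 2
      + (((ln P)\<^sup>2 / 4 + 2) / q + (N * (2 * ln q / (real q * real P)) + 1 / (2 * 2 ^ N)))"
  proof (intro add_mono)
    show "sum (vterm q) A \<le> (2 * ln q + 3) / real q ^ 2"
      using q S by (intro sum_vterm_above_le) (auto simp: A_def)
    have B_below: "p < q" if "p \<in> B" for p using that S by (auto simp: B_def vset_def)
    then show "sum (vterm q) (B \<inter> {p. p \<le> P}) \<le> ((ln P)\<^sup>2 / 4 + 2) / q"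
      using q S P by (intro sum_vterm_upto_le) (auto simp: B_def)
    show "sum (vterm q) (B - {p. p \<le> P}) \<le> N * (2 * ln q / (real q * real P)) + 1 / (2 * 2 ^ N)"
      using q S P B_below by (intro sum_vterm_between_le) (auto simp: B_def)
  qed
  also have "1 / (2 * 2 ^ N) \<le> 1 / (2 * real q)"
    using N q by (intro divide_left_mono) auto
  also have "(2 * ln q + 3) / real q ^ 2
      + (((ln P)\<^sup>2 / 4 + 2) / q + (N * (2 * ln q / (real q * real P)) + 1 / (2 * real q)))
    = ((2 * ln q + 3) / q + ((ln P)\<^sup>2 / 4 + 2) + N * (2 * ln q / P) + 1 / 2) / q"
    using q P by (simp add: field_simps power2_eq_square)
  finally show ?thesis by simp
qed

lemma class_bounds_total_le:
  fixes L q P N :: real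
  assumes L: "4 \<le> L" and q: "9 * L + 1 \<le> q" and P: "9 * L - 1 \<le> P" "P \<le> 9 * L"
    and N: "0 \<le> N" "N \<le> 3 / 2 * L + 1" and ln_9L: "3 \<le> ln (9 * L)" "ln (9 * L) \<le> L"
  shows "(2 * L + 3) / q + ((ln P)\<^sup>2 / 4 + 2) + N * (2 * L / P) + 1 / 2 \<le> 2 / 3 * ln (9 * L) * L"
proof -
  define u where "u = ln (9 * L)"
  have "(2 * L + 3) / q \<le> 1 / 3" using L q by (simp add: field_simps)
  moreover have "(ln P)\<^sup>2 / 4 \<le> L * u / 4"
  proof -
    have "0 \<le> ln P" "ln P \<le> u" using L P by (simp_all add: u_def)
    then have "(ln P)\<^sup>2 \<le> u * u" by (simp add: power2_eq_square mult_mono)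
    also have "\<dots> \<le> L * u" using ln_9L by (intro mult_right_mono) (simp_all add: u_def)
    finally show ?thesis by simp
  qed
  moreover have "N * (2 * L / P) \<le> L / 3 + 1 / 3"
  proof -
    have "N * (2 * L) \<le> (3 / 2 * L + 1) * (2 * L)" using N L by (intro mult_right_mono) auto
    also have "\<dots> \<le> (L + 1) / 3 * (9 * L - 1)" using L by (simp add: algebra_simps)
    also have "\<dots> \<le> (L + 1) / 3 * P" using L P by (intro mult_left_mono) auto
    finally have "N * (2 * L) / P \<le> (L + 1) / 3" using L P by (simp add: pos_divide_le_eq)
    then show ?thesis by (simp add: add_divide_distrib)
  qed
  moreover have "3 * L \<le> L * u" using L ln_9L by (simp add: u_def mult.commute mult_left_mono)
  ultimately have "(2 * L + 3) / q + ((ln P)\<^sup>2 / 4 + 2) + N * (2 * L / P) + 1 / 2 \<le> 2 / 3 * (L * u)"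
    using L by linarith
  then show ?thesis by (simp add: u_def mult_ac)
qed

lemma sum_vterm_le_log_bound:
  fixes q :: nat
  assumes q: "prime q" "67 \<le> q" and S: "finite S" "S \<subseteq> vset q"
  shows "sum (vterm q) S \<le> 2 * ln (9 * ln (real q)) * ln (real q) / (3 * real q)"
proof -
  define L where "L = ln (real q)"
  define P where "P = nat \<lfloor>9 * L\<rfloor>"
  define N where "N = nat \<lceil>3 / 2 * L\<rceil>"
  have L: "4 \<le> L" using ln_ge_of_two_power_le[of 6 "real q"] q by (simp add: L_def)
  have qL: "9 * L + 1 \<le> q" using nine_ln_plus_one_le q by (simp add: L_def)
  have P: "9 * L - 1 \<le> P" "P \<le> 9 * L" using L by (simp_all add: P_def)
  have N: "3 / 2 * L \<le> N" "N \<le> 3 / 2 * L + 1" using L by (simp_all add: N_def)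
  have "2 / 3 * N \<le> N * ln 2" using mult_left_mono[OF ln2_ge_two_thirds, of "real N"] by simp
  then have "ln q \<le> N * ln 2" using N by (simp add: L_def)
  then have "ln (real q) \<le> ln (2 ^ N)" by (simp add: ln_realpow)
  then have "real q \<le> 2 ^ N" using q by (subst (asm) ln_le_cancel_iff) auto
  moreover have "3 \<le> ln (9 * L)" using ln_ge_of_two_power_le[of 5 "9 * L"] L by simp
  moreover have "ln (9 * L) \<le> L" using L qL by (simp add: L_def)
  moreover have "3 \<le> P" "P < q" using P L qL by linarith+
  ultimately have "sum (vterm q) S
      \<le> ((2 * L + 3) / q + ((ln P)\<^sup>2 / 4 + 2) + N * (2 * L / P) + 1 / 2) / q"
    unfolding L_def using q S by (intro sum_vterm_le) auto
  also have "\<dots> \<le> (2 / 3 * ln (9 * L) * L) / q"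
    using class_bounds_total_le[OF L qL P _ N(2) \<open>3 \<le> ln (9 * L)\<close> \<open>ln (9 * L) \<le> L\<close>]
    by (intro divide_right_mono) auto
  finally show ?thesis by (simp add: L_def)
qed

theorem lemma6:
  fixes q :: nat
  assumes "prime q" and "q \<ge> 67"
  shows "vterm q summable_on vset q \<and>
         infsum (vterm q) (vset q) \<le> 2 * ln (9 * ln (real q)) * ln (real q) / (3 * real q)"
proof
  have bound: "sum (vterm q) S \<le> 2 * ln (9 * ln (real q)) * ln (real q) / (3 * real q)"
    if "finite S" "S \<subseteq> vset q" for S
    using sum_vterm_le_log_bound assms that by blast
  show summable: "vterm q summable_on vset q"
    using vterm_nonneg[OF assms(1)] bound by (intro nonneg_bdd_above_summable_on bdd_aboveI) auto
  show "infsum (vterm q) (vset q) \<le> 2 * ln (9 * ln (real q)) * ln (real q) / (3 * real q)"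
    using summable bound by (rule infsum_le_finite_sums)
qed

end
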